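(* Let $A=(a_{ij})_{i,j\in I}$ be a random matrix with nonnegative off-diagonal entries, let $L$ be its (random) Laplacian, define $a_{ii}:=1-\sum_{j\ne i}a_{ij}$, and let $\alpha>0$ be a constant such that almost surely $a_{ii}\ge\alpha$ for all $i\in I$. If $\mathbf{1}^*\mathbb{E}(L)=0$, then $$\mathbb{E}(L^*L)\le(1-\alpha)\,\mathbb{E}(L+L^* ).$$
   Context: $I$ is a finite set. The Laplacian $L$ of a matrix $A$ with nonnegative off-diagonal entries is defined by $L_{ij}=-A_{ij}$ for $i\ne j$ and $L_{ii}=\sum_{j\ne i}A_{ij}$. $\mathbf{1}$ is the all-ones vector, $M^*$ is the transpose. For square matrices, $A\le B$ means $A-B$ is negative semidefinite. *)

theory Defs
  imports "HOL-Probability.Probability"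
begin

definition laplacian :: "real^'i^'i \<Rightarrow> real^'i^'i" where
  "laplacian A = (\<chi> i j. if i = j then (\<Sum>k\<in>UNIV - {i}. A $ i $ k) else - A $ i $ j)"

definition mat_expectation :: "'a measure \<Rightarrow> ('a \<Rightarrow> real^'n^'m) \<Rightarrow> real^'n^'m" where
  "mat_expectation M X = (\<chi> i j. integral\<^sup>L M (\<lambda>\<omega>. X \<omega> $ i $ j))"

definition neg_semidef :: "real^'n^'n \<Rightarrow> bool" where
  "neg_semidef B \<longleftrightarrow> (\<forall>x. x \<bullet> (B *v x) \<le> 0)"

definition mat_le :: "real^'n^'n \<Rightarrow> real^'n^'n \<Rightarrow> bool" where
  "mat_le A B \<longleftrightarrow> neg_semidef (A - B)"

end

theory Submission
  imports Defs
begin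

(* For a fixed matrix B with nonnegative off-diagonal entries and row sums
   (over j \<noteq> i) at most \<beta>, the i-th entry of L x is \<Sum>j. B i j (x i - x j), so a weighted
   Cauchy-Schwarz inequality gives (L x)_i^2 \<le> \<beta> \<Sum>j. B i j (x i - x j)^2.  Expanding the
   square and summing over i yields the deterministic quadratic-form bound
       x\<^sup>T L\<^sup>T L x \<le> \<beta> (x\<^sup>T (L + L\<^sup>T) x - 1\<^sup>T L y),   where y j = (x j)^2.
   With \<beta> = 1 - \<alpha> this holds almost surely.  The entries of L are a.s. bounded by 1, so all
   matrices involved are integrable and expectation commutes with quadratic forms.  Taking
   expectations, the correction term vanishes because 1\<^sup>T E(L) = 0, and the resulting
   inequality for every x is exactly the semidefinite order E(L\<^sup>T L) \<le> (1-\<alpha>) E(L + L\<^sup>T). *)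

lemma laplacian_mult_vec_nth:
  fixes B :: "real^'i^'i"
  shows "(laplacian B *v x) $ i = (\<Sum>j\<in>UNIV-{i}. B$i$j * (x$i - x$j))"
proof -
  have "(laplacian B *v x) $ i = (\<Sum>j\<in>UNIV. laplacian B $ i $ j * x $ j)"
    by (simp add: matrix_vector_mult_def)
  also have "\<dots> = laplacian B $ i $ i * x $ i + (\<Sum>j\<in>UNIV-{i}. laplacian B $ i $ j * x $ j)"
    by (simp add: sum.remove)
  also have "\<dots> = (\<Sum>j\<in>UNIV-{i}. B$i$j) * x$i + (\<Sum>j\<in>UNIV-{i}. - B $ i $ j * x $ j)"
    by (simp add: laplacian_def)
  also have "\<dots> = (\<Sum>j\<in>UNIV-{i}. B$i$j * (x$i - x$j))"
    by (simp add: sum_distrib_right right_diff_distrib sum_subtractf flip: sum_negf)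
  finally show ?thesis .
qed

lemma weighted_cauchy_schwarz:
  fixes a d :: "'j \<Rightarrow> real"
  assumes "finite S" "\<And>j. j \<in> S \<Longrightarrow> a j \<ge> 0" "sum a S \<le> \<beta>"
  shows "(\<Sum>j\<in>S. a j * d j)^2 \<le> \<beta> * (\<Sum>j\<in>S. a j * (d j)^2)"
proof -
  let ?s = "sum a S"
  have nn: "0 \<le> (\<Sum>j\<in>S. a j * (d j)^2)" using assms by (intro sum_nonneg) auto
  have "(\<Sum>j\<in>S. a j * d j)^2 \<le> ?s * (\<Sum>j\<in>S. a j * (d j)^2)"
  proof (cases "?s = 0")
    case True
    then have "\<forall>j\<in>S. a j = 0" using assms sum_nonneg_eq_0_iff by blast
    then show ?thesis by simp
  next
    case False
    have s_pos: "?s > 0" using False assms sum_nonneg[of S a] by force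
    (* the variance of d around its weighted mean m is nonnegative *)
    define m where "m = (\<Sum>j\<in>S. a j * d j) / ?s"
    have "0 \<le> (\<Sum>j\<in>S. a j * (d j - m)^2)" using assms by (intro sum_nonneg) auto
    also have "\<dots> = (\<Sum>j\<in>S. a j * (d j)^2) - 2 * m * (\<Sum>j\<in>S. a j * d j) + m^2 * ?s"
      by (simp add: power2_diff algebra_simps sum.distrib sum_subtractf sum_distrib_left sum_distrib_right)
    also have "\<dots> = (\<Sum>j\<in>S. a j * (d j)^2) - (\<Sum>j\<in>S. a j * d j)^2 / ?s"
      using s_pos by (simp add: m_def power2_eq_square field_simps)
    finally show ?thesis using s_pos by (simp add: field_simps)
  qed
  also have "\<dots> \<le> \<beta> * (\<Sum>j\<in>S. a j * (d j)^2)" using assms(3) nn by (rule mult_right_mono)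
  finally show ?thesis .
qed

lemma laplacian_quadratic_bound:
  fixes B :: "real^'i^'i"
  assumes nonneg: "\<And>i j. i\<noteq>j \<Longrightarrow> B$i$j \<ge> 0"
    and row_sum: "\<And>i. (\<Sum>j\<in>UNIV-{i}. B$i$j) \<le> \<beta>"
  shows "x \<bullet> ((transpose (laplacian B) ** laplacian B) *v x)
     \<le> \<beta> * (x \<bullet> ((laplacian B + transpose (laplacian B)) *v x) - 1 \<bullet> (laplacian B *v (\<chi> j. (x$j)^2)))"
proof -
  let ?L = "laplacian B"
  let ?y = "(\<chi> j. (x$j)^2) :: real^'i"
  define T where "T i = (\<Sum>j\<in>UNIV-{i}. B$i$j * (x$i - x$j)^2)" for i
  have LtL: "x \<bullet> ((transpose ?L ** ?L) *v x) = (\<Sum>i\<in>UNIV. ((?L *v x)$i)^2)"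
  proof -
    have "x \<bullet> ((transpose ?L ** ?L) *v x) = x \<bullet> ((?L *v x) v* ?L)"
      by (simp flip: matrix_vector_mul_assoc)
    also have "\<dots> = (?L *v x) \<bullet> (?L *v x)"
      by (metis dot_lmul_matrix inner_commute)
    finally show ?thesis by (simp add: inner_vec_def power2_eq_square)
  qed
  have LLt: "x \<bullet> ((?L + transpose ?L) *v x) = 2 * (\<Sum>i\<in>UNIV. x$i * (?L *v x)$i)"
  proof -
    have "x \<bullet> (transpose ?L *v x) = x \<bullet> (?L *v x)"
      by (metis transpose_matrix_vector dot_lmul_matrix inner_commute)
    then show ?thesis by (simp add: algebra_simps inner_add_right inner_vec_def sum.distrib)
  qed
  have T_eq: "T i = 2 * (x$i * (?L *v x)$i) - (?L *v ?y)$i" for i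
    unfolding T_def laplacian_mult_vec_nth
    by (simp add: sum_distrib_left sum.distrib flip: sum_subtractf)
       (rule sum.cong; simp add: power2_diff algebra_simps power2_eq_square)
  have row_bound: "((?L *v x)$i)^2 \<le> \<beta> * T i" for i
    unfolding laplacian_mult_vec_nth T_def
    by (rule weighted_cauchy_schwarz) (auto intro: nonneg row_sum)
  have "(\<Sum>i\<in>UNIV. ((?L *v x)$i)^2) \<le> (\<Sum>i\<in>UNIV. \<beta> * T i)"
    by (rule sum_mono) (rule row_bound)
  also have "\<dots> = \<beta> * (2 * (\<Sum>i\<in>UNIV. x$i * (?L *v x)$i) - (\<Sum>i\<in>UNIV. (?L *v ?y)$i))"
    by (simp add: T_eq sum_distrib_left sum_subtractf algebra_simps)
  finally show ?thesis using LtL LLt by (simp add: inner_vec_def)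
qed

lemma laplacian_entry_bound:
  fixes B :: "real^'i^'i"
  assumes nonneg: "\<And>i j. i\<noteq>j \<Longrightarrow> B$i$j \<ge> 0"
    and row_sum: "\<And>i. (\<Sum>j\<in>UNIV-{i}. B$i$j) \<le> 1"
  shows "\<bar>laplacian B $ i $ j\<bar> \<le> 1"
proof (cases "i = j")
  case True
  have "0 \<le> (\<Sum>j\<in>UNIV - {i}. B $ i $ j)" using nonneg by (intro sum_nonneg) auto
  then show ?thesis using True row_sum[of i] by (simp add: laplacian_def)
next
  case False
  have "B $ i $ j \<le> (\<Sum>j\<in>UNIV - {i}. B $ i $ j)"
    using False nonneg by (intro member_le_sum) auto
  then show ?thesis using False nonneg[OF False] row_sum[of i] by (simp add: laplacian_def)
qed

lemma integrable_gram_entries: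
  fixes F :: "'a \<Rightarrow> real^'i^'i"
  assumes "finite_measure M"
    and meas: "\<And>i j. (\<lambda>\<omega>. F \<omega> $ i $ j) \<in> borel_measurable M"
    and bound: "AE \<omega> in M. \<forall>i j. \<bar>F \<omega> $ i $ j\<bar> \<le> c"
  shows "integrable M (\<lambda>\<omega>. F \<omega> $ i $ j)"
    and "integrable M (\<lambda>\<omega>. (transpose (F \<omega>) ** F \<omega>) $ i $ j)"
proof -
  interpret finite_measure M by fact
  show "integrable M (\<lambda>\<omega>. F \<omega> $ i $ j)"
    using bound by (intro integrable_const_bound[where B=c] meas) auto
  show "integrable M (\<lambda>\<omega>. (transpose (F \<omega>) ** F \<omega>) $ i $ j)"
  proof (rule integrable_const_bound[where B="real CARD('i) * c^2"])
    show "AE \<omega> in M. norm ((transpose (F \<omega>) ** F \<omega>) $ i $ j) \<le> real CARD('i) * c^2"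
      using bound
    proof eventually_elim
      case (elim \<omega>)
      have "\<bar>F \<omega> $ k $ i * F \<omega> $ k $ j\<bar> \<le> c^2" for k
        using elim unfolding abs_mult power2_eq_square
        by (intro mult_mono) (auto intro: order_trans[OF abs_ge_zero])
      then have "\<bar>\<Sum>k\<in>UNIV. F \<omega> $ k $ i * F \<omega> $ k $ j\<bar> \<le> (\<Sum>k\<in>(UNIV::'i set). c^2)"
        by (intro order_trans[OF sum_abs] sum_mono)
      then show ?case by (simp add: matrix_matrix_mult_def transpose_def)
    qed
    show "(\<lambda>\<omega>. (transpose (F \<omega>) ** F \<omega>) $ i $ j) \<in> borel_measurable M"
      unfolding matrix_matrix_mult_def transpose_def
      by (simp, intro borel_measurable_sum borel_measurable_times meas)
  qed
qed

lemma mat_expectation_bilinear: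
  fixes F :: "'a \<Rightarrow> real^'i^'i"
  assumes "\<And>i j. integrable M (\<lambda>\<omega>. F \<omega> $ i $ j)"
  shows "integrable M (\<lambda>\<omega>. u \<bullet> (F \<omega> *v v))"
    and "u \<bullet> (mat_expectation M F *v v) = (\<integral>\<omega>. u \<bullet> (F \<omega> *v v) \<partial>M)"
  using assms
  by (simp_all add: inner_vec_def matrix_vector_mult_def mat_expectation_def sum_distrib_left
       integral_sum integrable_sum mult.assoc)

lemma mat_expectation_quadratic_mono:
  fixes P Q R :: "'a \<Rightarrow> real^'i^'i"
  assumes int_P: "\<And>i j. integrable M (\<lambda>\<omega>. P \<omega> $ i $ j)"
    and int_Q: "\<And>i j. integrable M (\<lambda>\<omega>. Q \<omega> $ i $ j)"
    and int_R: "\<And>i j. integrable M (\<lambda>\<omega>. R \<omega> $ i $ j)"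
    and pointwise: "AE \<omega> in M. x \<bullet> (P \<omega> *v x) \<le> c * (x \<bullet> (Q \<omega> *v x) - u \<bullet> (R \<omega> *v v))"
    and zero_mean: "u \<bullet> (mat_expectation M R *v v) = 0"
  shows "x \<bullet> (mat_expectation M P *v x) \<le> c * (x \<bullet> (mat_expectation M Q *v x))"
proof -
  note E = mat_expectation_bilinear[of M]
  have "x \<bullet> (mat_expectation M P *v x) = (\<integral>\<omega>. x \<bullet> (P \<omega> *v x) \<partial>M)"
    using E(2)[OF int_P] .
  also have "\<dots> \<le> (\<integral>\<omega>. c * (x \<bullet> (Q \<omega> *v x) - u \<bullet> (R \<omega> *v v)) \<partial>M)"
    using E(1)[OF int_P] E(1)[OF int_Q] E(1)[OF int_R] pointwise
    by (intro integral_mono_AE) auto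
  also have "\<dots> = c * ((\<integral>\<omega>. x \<bullet> (Q \<omega> *v x) \<partial>M) - (\<integral>\<omega>. u \<bullet> (R \<omega> *v v) \<partial>M))"
    using E(1)[OF int_Q] E(1)[OF int_R] by simp
  also have "\<dots> = c * (x \<bullet> (mat_expectation M Q *v x))"
    using zero_mean E(2)[OF int_Q] E(2)[OF int_R] by simp
  finally show ?thesis .
qed

lemma mat_le_scaleR_iff:
  fixes P Q :: "real^'n^'n"
  shows "mat_le P (c *\<^sub>R Q) \<longleftrightarrow> (\<forall>x. x \<bullet> (P *v x) \<le> c * (x \<bullet> (Q *v x)))"
  by (simp add: mat_le_def neg_semidef_def matrix_vector_mult_diff_rdistrib inner_diff_right
      flip: scaleR_matrix_vector_assoc)

theorem lemma2:
  fixes M :: "'a measure" and A :: "'a \<Rightarrow> real^'i^'i" and \<alpha> :: real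
  assumes "prob_space M"
    and meas: "\<And>i j. (\<lambda>\<omega>. A \<omega> $ i $ j) \<in> borel_measurable M"
    and nonneg: "\<And>\<omega> i j. \<omega> \<in> space M \<Longrightarrow> i \<noteq> j \<Longrightarrow> A \<omega> $ i $ j \<ge> 0"
    and alpha_pos: "\<alpha> > 0"
    and diag: "AE \<omega> in M. \<forall>i. 1 - (\<Sum>j\<in>UNIV - {i}. A \<omega> $ i $ j) \<ge> \<alpha>"
    and colsum: "(1 :: real^'i) v* mat_expectation M (\<lambda>\<omega>. laplacian (A \<omega>)) = 0"
  shows "mat_le (mat_expectation M (\<lambda>\<omega>. transpose (laplacian (A \<omega>)) ** laplacian (A \<omega>)))
                ((1 - \<alpha>) *\<^sub>R mat_expectation M (\<lambda>\<omega>. laplacian (A \<omega>) + transpose (laplacian (A \<omega>))))"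
proof -
  interpret prob_space M by fact
  define L where "L \<omega> = laplacian (A \<omega>)" for \<omega>
  have good: "AE \<omega> in M. (\<forall>i j. i \<noteq> j \<longrightarrow> A \<omega> $ i $ j \<ge> 0)
                          \<and> (\<forall>i. (\<Sum>j\<in>UNIV - {i}. A \<omega> $ i $ j) \<le> 1 - \<alpha>)"
    using diag AE_space by eventually_elim (auto intro: nonneg simp: algebra_simps)
  have bound: "AE \<omega> in M. \<forall>i j. \<bar>L \<omega> $ i $ j\<bar> \<le> 1"
    using good unfolding L_def
  proof eventually_elim
    case (elim \<omega>)
    then show ?case
      using alpha_pos by (auto intro!: laplacian_entry_bound intro: order_trans)
  qed
  have measL: "(\<lambda>\<omega>. L \<omega> $ i $ j) \<in> borel_measurable M" for i j
    unfolding L_def laplacian_def by (cases "i = j") (simp_all add: meas borel_measurable_sum)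
  note int_L = integrable_gram_entries(1)[OF finite_measure_axioms measL bound]
    and int_LtL = integrable_gram_entries(2)[OF finite_measure_axioms measL bound]
  have int_sym: "integrable M (\<lambda>\<omega>. (L \<omega> + transpose (L \<omega>)) $ i $ j)" for i j
    by (simp add: transpose_def int_L)
  show ?thesis
    unfolding mat_le_scaleR_iff L_def[symmetric]
  proof
    fix x :: "real^'i"
    let ?y = "(\<chi> j. (x$j)^2) :: real^'i"
    (* the correction term 1\<^sup>T L y has zero mean because 1\<^sup>T E(L) = 0 *)
    have zero_mean: "1 \<bullet> (mat_expectation M L *v ?y) = 0"
      using colsum by (simp add: L_def[abs_def] flip: dot_lmul_matrix)
    have "AE \<omega> in M. x \<bullet> ((transpose (L \<omega>) ** L \<omega>) *v x)
        \<le> (1 - \<alpha>) * (x \<bullet> ((L \<omega> + transpose (L \<omega>)) *v x) - 1 \<bullet> (L \<omega> *v ?y))"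
      using good unfolding L_def by eventually_elim (rule laplacian_quadratic_bound, auto)
    then show "x \<bullet> (mat_expectation M (\<lambda>\<omega>. transpose (L \<omega>) ** L \<omega>) *v x)
        \<le> (1 - \<alpha>) * (x \<bullet> (mat_expectation M (\<lambda>\<omega>. L \<omega> + transpose (L \<omega>)) *v x))"
      by (rule mat_expectation_quadratic_mono[OF int_LtL int_sym int_L _ zero_mean])
  qed
qed

end
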